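(* Consider online multiclass classification with an arbitrary feedback graph $\mathcal{G}=([K],\mathcal{E})$, and suppose that for every round $t$, $\ell_t=\ell(\cdot,\mathbf{x}_t,y_t)$ is a regular surrogate loss with respect to $\ell$ with constant $L$. Suppose the OCO algorithm $\mathcal{A}$ satisfies, for some $h:\mathcal{W}\to\mathbb{R}_+$ and every $\mathbf{U}\in\mathcal{W}$, $\sum_{t=1}^T(\widehat\ell_t(\mathbf{W}_t)-\widehat\ell_t(\mathbf{U}))\le h(\mathbf{U})\sqrt{\sum_{t=1}^T\|\widehat{\mathbf{g}}_t\|^2}$ with $\widehat{\mathbf{g}}_t=v_t\nabla\ell_t(\mathbf{W}_t)$. Then for any realization of the randomized predictions $y_1',\dots,y_T'$, Gappletron run on $\mathcal{G}$ with $\mathcal{A}$ and a gap map $a:\mathbb{R}^{K\times d}\times\mathbb{R}^d\to[0,1]$ satisfying $a(\mathbf{W}_t,\mathbf{x}_t)=\ell(\mathbf{W}_t,\mathbf{x}_t,y_t^\star)$ satisfies, for all $\mathbf{U}\in\mathcal{W}$, $$\sum_{t=1}^T\sum_{y\in[K]}p_t'(y)\mathbb{1}[y\ne y_t]\le\sum_{t=1}^T\widehat\ell_t(\mathbf{U})+\sum_{t=1}^T\gamma_t+\inf_{\eta>0}\Big\{\frac{h(\mathbf{U})^2}{2\eta}+\sum_{t=1}^T\Big(\frac{K-1}{K}\ell_t(\mathbf{W}_t)-v_t\ell_t(\mathbf{W}_t)+\eta v_t^2L\ell_t(\mathbf{W}_t)\Big)\Big\}.$$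
   Context: Setting: for $t=1,\dots,T$ an oblivious adversary fixes $\mathbf{x}_t\in\mathbb{R}^d$ and $y_t\in[K]=\{1,\dots,K\}$; the learner sees $\mathbf{x}_t$ and predicts $y_t'\in[K]$. A feedback graph is a directed graph $\mathcal{G}=([K],\mathcal{E})$ in which every node has at least one incoming edge (self-loops allowed); $\mathrm{out}(y')=\{y:(y',y)\in\mathcal{E}\}$. After predicting $y_t'$ the learner observes $(y,\mathbb{1}[y\ne y_t])$ for $y\in\mathrm{out}(y_t')$; if a node has $K-1$ outgoing edges the missing edge is added. $\mathcal{Q}=\{y':\mathrm{out}(y')=[K]\}$ (revealing actions, possibly empty). A dominating set is $S\subseteq[K]$ such that every $y\in[K]$ lies in $\mathrm{out}(y')$ for some $y'\in S$; $\rho$ is the minimum size of a dominating set and $S$ is a minimum dominating set. $\mathbf{1}$ all-ones vector, $\mathbf{1}_S$ indicator of $S$, $\mathbf{e}_k$ basis vectors of $\mathbb{R}^K$; $P_t$ is probability conditional on past predictions and feedback. Predictors $\mathbf{W}\in\mathcal{W}\subseteq\mathbb{R}^{K\times d}$ ($\mathcal{W}$ convex), rows $\mathbf{W}^k$, identified with vectors of $\mathbb{R}^{Kd}$; $\|\cdot\|$ a fixed norm on $\mathbb{R}^{Kd}$. $\ell:\mathcal{W}\times\mathbb{R}^d\times[K]\to\mathbb{R}_+$ is convex in $\mathbf{W}$ with $\frac{K-1}{K}\ell(\mathbf{W},\mathbf{x},y)+\frac1K\ell(\mathbf{W},\mathbf{x},y^\star)\ge1$ for all $\mathbf{W},\mathbf{x}$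 and $y\ne y^\star:=\arg\max_k\langle\mathbf{W}^k,\mathbf{x}\rangle$; $\ell_t$ is regular with constant $L>0$ if moreover $\|\nabla\ell_t(\mathbf{W})\|^2\le2L\ell_t(\mathbf{W})$ for all $\mathbf{W}\in\mathcal{W}$. Gappletron (inputs $\mathcal{Q}$, $S$, OCO algorithm $\mathcal{A}$ on $\mathcal{W}$, $\gamma\ge0$, gap map $a$): $\mathbf{W}_1$ from $\mathcal{A}$; at round $t$: $y_t^\star=\arg\max_k\langle\mathbf{W}_t^k,\mathbf{x}_t\rangle$; $\gamma_t=0$ if $y_t^\star\in\mathcal{Q}$, else $\gamma_t=\min\{\tfrac12,\gamma/\sqrt{|\{s\le t:y_s^\star\notin\mathcal{Q}\}|}\}$; $a_t=a(\mathbf{W}_t,\mathbf{x}_t)$; $\zeta_t=\mathbb{1}[\gamma_t\le a_t]$; $\mathbf{p}_t'=(1-\zeta_ta_t-(1-\zeta_t)\gamma_t)\mathbf{e}_{y_t^\star}+\zeta_ta_t\frac1K\mathbf{1}+(1-\zeta_t)\frac{\gamma_t}{\rho}\mathbf{1}_S$; predict $y_t'\sim\mathbf{p}_t'$; $v_t=\mathbb{1}[y_t\in\mathrm{out}(y_t')]/P_t(y_t\in\mathrm{out}(y_t'))$; $\widehat\ell_t(\mathbf{W})=v_t\ell_t(\mathbf{W})$ is fed to $\mathcal{A}$, which returns $\mathbf{W}_{t+1}$. *)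

theory Defs
  imports "HOL-Analysis.Analysis"
begin

text \<open>Labels [K] are the elements of a finite type 'k, so K = CARD('k).
A feedback graph is a relation G on labels; G y' y means (y',y) is an edge.\<close>

definition feedback_graph :: "('k \<Rightarrow> 'k \<Rightarrow> bool) \<Rightarrow> bool" where
  "feedback_graph G \<longleftrightarrow> (\<forall>y. \<exists>y'. G y' y)"

text \<open>Out-neighbourhood after the preprocessing step: if a node has K-1 outgoing
edges, the missing edge is added (so its out-neighbourhood becomes all of [K]).\<close>
definition out_aug :: "('k::finite \<Rightarrow> 'k \<Rightarrow> bool) \<Rightarrow> 'k \<Rightarrow> 'k set" where
  "out_aug G y' = (if card {z. G y' z} = CARD('k) - 1 then UNIV else {z. G y' z})"

definition revealing :: "('k::finite \<Rightarrow> 'k \<Rightarrow> bool) \<Rightarrow> 'k set" where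
  "revealing G = {y'. out_aug G y' = UNIV}"

definition dominating :: "('k::finite \<Rightarrow> 'k \<Rightarrow> bool) \<Rightarrow> 'k set \<Rightarrow> bool" where
  "dominating G S \<longleftrightarrow> (\<forall>y. \<exists>y'\<in>S. y \<in> out_aug G y')"

definition min_dominating :: "('k::finite \<Rightarrow> 'k \<Rightarrow> bool) \<Rightarrow> 'k set \<Rightarrow> bool" where
  "min_dominating G S \<longleftrightarrow> dominating G S \<and> (\<forall>S'. dominating G S' \<longrightarrow> card S \<le> card S')"

text \<open>Exploration rate gamma_t of Gappletron (rounds are indexed 1..T);
ys t is the greedy label y_t^star.\<close>
definition gappl_gamma :: "'k set \<Rightarrow> real \<Rightarrow> (nat \<Rightarrow> 'k) \<Rightarrow> nat \<Rightarrow> real" where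
  "gappl_gamma Q \<gamma> ys t =
     (if ys t \<in> Q then 0
      else min (1/2) (\<gamma> / sqrt (real (card {s \<in> {1..t}. ys s \<notin> Q}))))"

text \<open>Gappletron's sampling distribution p'_t, given the dominating set S,
the exploration rate gam = gamma_t, the greedy label ystar and the gap a = a_t.\<close>
definition gappl_p :: "'k::finite set \<Rightarrow> real \<Rightarrow> 'k \<Rightarrow> real \<Rightarrow> 'k \<Rightarrow> real" where
  "gappl_p S gam ystar a y =
     (let \<zeta> = (if gam \<le> a then 1 else 0 :: real) in
        (1 - \<zeta> * a - (1 - \<zeta>) * gam) * (if y = ystar then 1 else 0)
        + \<zeta> * a / real CARD('k)
        + (1 - \<zeta>) * gam / real (card S) * (if y \<in> S then 1 else 0))"

definition obs_prob :: "('k::finite \<Rightarrow> 'k \<Rightarrow> bool) \<Rightarrow> ('k \<Rightarrow> real) \<Rightarrow> 'k \<Rightarrow> real" where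
  "obs_prob G p y = (\<Sum>y'\<in>{y'. y \<in> out_aug G y'}. p y')"

definition imp_weight :: "('k::finite \<Rightarrow> 'k \<Rightarrow> bool) \<Rightarrow> ('k \<Rightarrow> real) \<Rightarrow> 'k \<Rightarrow> 'k \<Rightarrow> real" where
  "imp_weight G p ypred y = (if y \<in> out_aug G ypred then 1 else 0) / obs_prob G p y"

end

theory Submission
  imports Defs
begin

text \<open>The expected number of mistakes in round t is 1 - p'_t(y_t). When the greedy label y_t^*
is wrong, the surrogate inequality together with the gap a_t = \<ell>(W_t, x_t, y_t^*) bounds it by
(K-1)/K \<ell>_t(W_t) + \<gamma>_t; when it is right, \<ell>_t(W_t) = a_t and the same bound is immediate.
Adding and subtracting \<Sum> v_t \<ell>_t(W_t) leaves the regret of the OCO algorithm on the weighted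
losses. Regularity gives \<Sum> |g_t|^2 \<le> 2X with X = L \<Sum> v_t^2 \<ell>_t(W_t), and
h \<surd>(2X) \<le> h^2/(2\<eta>) + \<eta> X for every \<eta> > 0. Only the OCO guarantee enters, which is why the
bound holds for every realization of the predictions.\<close>

lemma sum_mult_indicator_neq:
  fixes p :: "'a \<Rightarrow> 'b::comm_ring_1"
  assumes "finite A" "y \<in> A"
  shows "(\<Sum>k\<in>A. p k * (if k \<noteq> y then 1 else 0)) = sum p A - p y"
  using assms by (simp add: sum.remove[of A y] if_distrib cong: if_cong)

lemma sum_gappl_p:
  fixes S :: "'k::finite set"
  assumes "S \<noteq> {}"
  shows "(\<Sum>k\<in>UNIV. gappl_p S g ys a k) = 1"
proof -
  have "(\<Sum>k\<in>UNIV. (if k \<in> S then 1 else 0 :: real)) = real (card S)"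
    by (simp add: sum.If_cases)
  moreover have "card S \<noteq> 0" using assms by simp
  ultimately show ?thesis
    by (simp add: gappl_p_def Let_def sum.distrib sum_distrib_left[symmetric]
        sum_divide_distrib[symmetric] sum.If_cases)
qed

lemma gappl_p_mistake_le:
  fixes S :: "'k::finite set"
  assumes S: "S \<noteq> {}" and g: "0 \<le> g" and a: "0 \<le> a" and l: "0 \<le> l"
    and surrogate: "ys \<noteq> y \<Longrightarrow>
      1 \<le> (real CARD('k) - 1) / real CARD('k) * l + 1 / real CARD('k) * a"
    and gap: "ys = y \<Longrightarrow> l = a"
  shows "(\<Sum>k\<in>UNIV. gappl_p S g ys a k * (if k \<noteq> y then 1 else 0))
    \<le> (real CARD('k) - 1) / real CARD('k) * l + g"
proof -
  define K where "K = real CARD('k)"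
  have K: "1 \<le> K" by (simp add: K_def)
  have "(\<Sum>k\<in>UNIV. gappl_p S g ys a k * (if k \<noteq> y then 1 else 0)) = 1 - gappl_p S g ys a y"
    using sum_gappl_p[OF S] by (simp add: sum_mult_indicator_neq)
  also have "\<dots> \<le> (K - 1) / K * l + g"
  proof (cases "g \<le> a")
    case True
    then have p_y: "gappl_p S g ys a y = (1 - a) * (if ys = y then 1 else 0) + a / K"
      by (simp add: gappl_p_def K_def)
    show ?thesis
    proof (cases "ys = y")
      case True
      then have "1 - gappl_p S g ys a y = (K - 1) / K * l"
        using p_y gap K by (simp add: field_simps)
      then show ?thesis using g by simp
    next
      case False
      then show ?thesis using p_y surrogate g by (simp add: K_def)
    qed
  next
    case False
    then have p_y: "(1 - g) * (if ys = y then 1 else 0) \<le> gappl_p S g ys a y"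
      using g by (simp add: gappl_p_def)
    have "0 \<le> (K - 1) / K * l" using K l by simp
    moreover have "1 / K * a \<le> g"
      using False K g mult_left_mono[of 1 K g] by (simp add: divide_le_eq)
    ultimately show ?thesis
      using p_y surrogate by (cases "ys = y") (auto simp: K_def)
  qed
  finally show ?thesis by (simp add: K_def)
qed

lemma mult_sqrt_le_sq_div_add:
  fixes h X \<eta> :: real
  assumes "0 \<le> X" "0 < \<eta>"
  shows "h * sqrt (2 * X) \<le> h\<^sup>2 / (2 * \<eta>) + \<eta> * X"
proof -
  have "2 * h * (\<eta> * sqrt (2 * X)) \<le> h\<^sup>2 + (\<eta> * sqrt (2 * X))\<^sup>2"
    by (rule sum_squares_bound)
  also have "(\<eta> * sqrt (2 * X))\<^sup>2 = 2 * \<eta> * (\<eta> * X)"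
    using assms by (simp add: power_mult_distrib power2_eq_square)
  finally show ?thesis using assms by (simp add: field_simps)
qed

lemma weighted_regret_le_INF:
  fixes b l l' v r :: "'a \<Rightarrow> real"
  assumes regret: "(\<Sum>t\<in>I. v t * l t - v t * l' t) \<le> h * sqrt (\<Sum>t\<in>I. (v t)\<^sup>2 * r t)"
    and regular: "\<forall>t\<in>I. r t \<le> 2 * L * l t"
    and h: "0 \<le> h" and L: "0 \<le> L" and l: "\<forall>t\<in>I. 0 \<le> l t"
  shows "(\<Sum>t\<in>I. b t) \<le> (\<Sum>t\<in>I. v t * l' t)
    + (INF \<eta>\<in>{0<..}. h\<^sup>2 / (2 * \<eta>) + (\<Sum>t\<in>I. b t - v t * l t + \<eta> * (v t)\<^sup>2 * L * l t))"
proof -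
  define X where "X = (\<Sum>t\<in>I. (v t)\<^sup>2 * L * l t)"
  have X: "0 \<le> X" unfolding X_def using l L by (intro sum_nonneg) simp
  have "(\<Sum>t\<in>I. (v t)\<^sup>2 * r t) \<le> 2 * X"
    unfolding X_def sum_distrib_left
  proof (intro sum_mono)
    fix t assume "t \<in> I"
    then have "(v t)\<^sup>2 * r t \<le> (v t)\<^sup>2 * (2 * L * l t)" using regular by (simp add: mult_left_mono)
    then show "(v t)\<^sup>2 * r t \<le> 2 * ((v t)\<^sup>2 * L * l t)" by (simp add: algebra_simps)
  qed
  then have "(\<Sum>t\<in>I. v t * l t) - (\<Sum>t\<in>I. v t * l' t) \<le> h * sqrt (2 * X)"
    using regret h by (simp add: sum_subtractf) (meson mult_left_mono order_trans real_sqrt_le_iff)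
  moreover have "(\<Sum>t\<in>I. b t - v t * l t + \<eta> * (v t)\<^sup>2 * L * l t)
      = (\<Sum>t\<in>I. b t) - (\<Sum>t\<in>I. v t * l t) + \<eta> * X" for \<eta>
    by (simp add: X_def sum.distrib sum_subtractf sum_distrib_left mult.assoc)
  ultimately have "(\<Sum>t\<in>I. b t) - (\<Sum>t\<in>I. v t * l' t)
      \<le> h\<^sup>2 / (2 * \<eta>) + (\<Sum>t\<in>I. b t - v t * l t + \<eta> * (v t)\<^sup>2 * L * l t)" if "0 < \<eta>" for \<eta>
    using mult_sqrt_le_sq_div_add[OF X that, of h] by simp
  then have "(\<Sum>t\<in>I. b t) - (\<Sum>t\<in>I. v t * l' t)
      \<le> (INF \<eta>\<in>{0<..}. h\<^sup>2 / (2 * \<eta>) + (\<Sum>t\<in>I. b t - v t * l t + \<eta> * (v t)\<^sup>2 * L * l t))"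
    by (intro cINF_greatest) auto
  then show ?thesis by linarith
qed

theorem lemma2:
  fixes G :: "'k::finite \<Rightarrow> 'k \<Rightarrow> bool"
    and S :: "'k set"
    and Wset :: "(real^'d::finite^'k) set"
    and nrm :: "real^'d^'k \<Rightarrow> real"
    and loss :: "real^'d^'k \<Rightarrow> real^'d \<Rightarrow> 'k \<Rightarrow> real"
    and grad :: "nat \<Rightarrow> real^'d^'k \<Rightarrow> real^'d^'k"
    and amax :: "real^'d^'k \<Rightarrow> real^'d \<Rightarrow> 'k"
    and a :: "real^'d^'k \<Rightarrow> real^'d \<Rightarrow> real"
    and h :: "real^'d^'k \<Rightarrow> real"
    and L \<gamma> :: real
    and T :: nat
    and x :: "nat \<Rightarrow> real^'d"
    and y :: "nat \<Rightarrow> 'k"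
    and W :: "nat \<Rightarrow> real^'d^'k"
    and ypred :: "nat \<Rightarrow> 'k"
    and ys :: "nat \<Rightarrow> 'k" and gam :: "nat \<Rightarrow> real"
    and p :: "nat \<Rightarrow> 'k \<Rightarrow> real" and v :: "nat \<Rightarrow> real"
  defines "ys \<equiv> (\<lambda>t. amax (W t) (x t))"
    and "gam \<equiv> gappl_gamma (revealing G) \<gamma> ys"
    and "p \<equiv> (\<lambda>t. gappl_p S (gam t) (ys t) (a (W t) (x t)))"
    and "v \<equiv> (\<lambda>t. imp_weight G (p t) (ypred t) (y t))"
  assumes graph: "feedback_graph G"
    and S_min: "min_dominating G S"
    and W_convex: "convex Wset"
    and nrm_nonneg: "\<forall>V. nrm V \<ge> 0"
    and nrm_zero: "\<forall>V. nrm V = 0 \<longleftrightarrow> V = 0"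
    and nrm_triangle: "\<forall>V V'. nrm (V + V') \<le> nrm V + nrm V'"
    and nrm_scale: "\<forall>c V. nrm (c *\<^sub>R V) = \<bar>c\<bar> * nrm V"
    and amax_is_argmax: "\<forall>V z j. inner (V $ j) z \<le> inner (V $ (amax V z)) z"
    and loss_nonneg: "\<forall>V\<in>Wset. \<forall>z k. loss V z k \<ge> 0"
    and loss_convex: "\<forall>z k. convex_on Wset (\<lambda>V. loss V z k)"
    and loss_surrogate: "\<forall>V\<in>Wset. \<forall>z k. k \<noteq> amax V z \<longrightarrow>
        (real CARD('k) - 1) / real CARD('k) * loss V z k
        + 1 / real CARD('k) * loss V z (amax V z) \<ge> 1"
    and L_pos: "L > 0"
    and grad_deriv: "\<forall>t\<in>{1..T}. \<forall>V\<in>Wset.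
        ((\<lambda>U. loss U (x t) (y t)) has_derivative (\<lambda>H. inner (grad t V) H)) (at V within Wset)"
    and regular: "\<forall>t\<in>{1..T}. \<forall>V\<in>Wset. (nrm (grad t V))\<^sup>2 \<le> 2 * L * loss V (x t) (y t)"
    and gamma_nonneg: "\<gamma> \<ge> 0"
    and a_range: "\<forall>V z. 0 \<le> a V z \<and> a V z \<le> 1"
    and a_gap: "\<forall>t\<in>{1..T}. a (W t) (x t) = loss (W t) (x t) (ys t)"
    and W_in: "\<forall>t\<in>{1..T}. W t \<in> Wset"
    and h_nonneg: "\<forall>U\<in>Wset. h U \<ge> 0"
    and oco_regret: "\<forall>U\<in>Wset.
        (\<Sum>t=1..T. v t * loss (W t) (x t) (y t) - v t * loss U (x t) (y t))
          \<le> h U * sqrt (\<Sum>t=1..T. (nrm (v t *\<^sub>R grad t (W t)))\<^sup>2)"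
    and realization: "\<forall>t\<in>{1..T}. p t (ypred t) > 0"
  shows "\<forall>U\<in>Wset.
    (\<Sum>t=1..T. \<Sum>k\<in>UNIV. p t k * (if k \<noteq> y t then 1 else 0))
      \<le> (\<Sum>t=1..T. v t * loss U (x t) (y t)) + (\<Sum>t=1..T. gam t)
        + (INF \<eta>\<in>{0<..}. h U ^ 2 / (2 * \<eta>)
            + (\<Sum>t=1..T. (real CARD('k) - 1) / real CARD('k) * loss (W t) (x t) (y t)
                 - v t * loss (W t) (x t) (y t)
                 + \<eta> * (v t)\<^sup>2 * L * loss (W t) (x t) (y t)))"
proof (intro ballI)
  fix U assume U: "U \<in> Wset"
  let ?c = "(real CARD('k) - 1) / real CARD('k)"
  let ?l = "\<lambda>t. loss (W t) (x t) (y t)"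
  have S: "S \<noteq> {}" using S_min by (auto simp: min_dominating_def dominating_def)
  have round: "(\<Sum>k\<in>UNIV. p t k * (if k \<noteq> y t then 1 else 0)) \<le> ?c * ?l t + gam t"
    if t: "t \<in> {1..T}" for t
    unfolding p_def
  proof (rule gappl_p_mistake_le[OF S])
    show "0 \<le> gam t" using gamma_nonneg by (simp add: gam_def gappl_gamma_def)
    show "0 \<le> a (W t) (x t)" using a_range by simp
    show "0 \<le> ?l t" using loss_nonneg W_in t by simp
    show "ys t \<noteq> y t \<Longrightarrow> 1 \<le> ?c * ?l t + 1 / real CARD('k) * a (W t) (x t)"
      using loss_surrogate W_in a_gap t by (simp add: ys_def)
    show "ys t = y t \<Longrightarrow> ?l t = a (W t) (x t)" using a_gap t by simp
  qed
  have "(\<Sum>t=1..T. ?c * ?l t) \<le> (\<Sum>t=1..T. v t * loss U (x t) (y t))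
      + (INF \<eta>\<in>{0<..}. (h U)\<^sup>2 / (2 * \<eta>)
          + (\<Sum>t=1..T. ?c * ?l t - v t * ?l t + \<eta> * (v t)\<^sup>2 * L * ?l t))"
  proof (rule weighted_regret_le_INF[where r = "\<lambda>t. (nrm (grad t (W t)))\<^sup>2"])
    show "(\<Sum>t=1..T. v t * ?l t - v t * loss U (x t) (y t))
        \<le> h U * sqrt (\<Sum>t=1..T. (v t)\<^sup>2 * (nrm (grad t (W t)))\<^sup>2)"
      using oco_regret U nrm_scale by (simp add: power_mult_distrib)
  qed (use regular W_in h_nonneg U L_pos loss_nonneg in auto)
  moreover have "(\<Sum>t=1..T. \<Sum>k\<in>UNIV. p t k * (if k \<noteq> y t then 1 else 0))
      \<le> (\<Sum>t=1..T. ?c * ?l t) + sum gam {1..T}"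
    unfolding sum.distrib[symmetric] by (rule sum_mono) (rule round)
  ultimately show "(\<Sum>t=1..T. \<Sum>k\<in>UNIV. p t k * (if k \<noteq> y t then 1 else 0))
      \<le> (\<Sum>t=1..T. v t * loss U (x t) (y t)) + sum gam {1..T}
        + (INF \<eta>\<in>{0<..}. (h U)\<^sup>2 / (2 * \<eta>)
            + (\<Sum>t=1..T. ?c * ?l t - v t * ?l t + \<eta> * (v t)\<^sup>2 * L * ?l t))"
    by linarith
qed

end
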